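(* Let $p \in \omega^*$ be a selective ultrafilter and consider the subspace $\{p\} \cup \omega$ of $\beta\omega$. Then $\mathsf{S}_1(\Omega_p, \Omega_p)$ holds in $\{p\}\cup\omega$, but $(\{p\} \cup \omega) \times S_{\mathfrak{c}}$ does not have countable tightness at $\langle p, 0\rangle$.
   Context: $\omega^* = \beta\omega \setminus \omega$ is the set of free ultrafilters on $\omega$; in $\{p\}\cup\omega$ the points of $\omega$ are isolated and the neighborhoods of $p$ are the sets $\{p\}\cup P$ with $P \in p$. A point $p \in \omega^*$ is a selective ultrafilter if for every partition $\{A_n : n < \omega\}$ of $\omega$ with $A_n \notin p$ for each $n$ there is $P \in p$ with $|P \cap A_n| = 1$ for each $n$. $\Omega_p$ is the collection of sets $A$ with $p \notin A$ and $p \in \overline{A}$; $\mathsf{S}_1(\Omega_p,\Omega_p)$ means that for every sequence $(A_n)_{n\in\omega}$ of elements of $\Omega_p$ one can select $a_n \in A_n$ with $\{a_n : n \in \omega\} \in \Omega_p$. $S_{\mathfrak{c}}$ is the sequential fan: the set $\{0\} \cup \bigcup_{\alpha < \mathfrak{c}} \{z_n^\alpha : n < \omega\}$ with all $z_n^\alpha$ distinct and isolated, and with basic neighborhoods of $0$ the sets $V(f) = \{0\} \cup \bigcup_{\alpha<\mathfrak{c}}\{z_n^\alpha : n \ge f(\alpha)\}$ for $f \in {}^{\mathfrak{c}}\omega$. A space $Z$ has countable tightness at $z$ if whenever $z \in \overline{A}$ there is a countable $B \subset A$ with $z \in \overline{B}$. *)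

theory Defs
  imports "HOL-Analysis.Analysis"
begin

text \<open>Points of omega-star: free ultrafilters on nat, as families of subsets of nat.\<close>
definition free_ultrafilter_nat :: "nat set set \<Rightarrow> bool" where
  "free_ultrafilter_nat p \<longleftrightarrow>
     {} \<notin> p \<and>
     (\<forall>A B. A \<in> p \<and> B \<in> p \<longrightarrow> A \<inter> B \<in> p) \<and>
     (\<forall>A B. A \<in> p \<and> A \<subseteq> B \<longrightarrow> B \<in> p) \<and>
     (\<forall>A. A \<in> p \<or> - A \<in> p) \<and>
     (\<forall>A\<in>p. infinite A)"

definition selective :: "nat set set \<Rightarrow> bool" where
  "selective p \<longleftrightarrow> free_ultrafilter_nat p \<and>
     (\<forall>A :: nat \<Rightarrow> nat set.
        (\<forall>n. A n \<noteq> {}) \<and> (\<forall>m n. m \<noteq> n \<longrightarrow> A m \<inter> A n = {}) \<and> (\<Union>n. A n) = UNIV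
        \<and> (\<forall>n. A n \<notin> p)
        \<longrightarrow> (\<exists>P\<in>p. \<forall>n. card (P \<inter> A n) = 1 \<and> finite (P \<inter> A n)))"

text \<open>The space {p} \<union> omega: None stands for p, Some n for the natural number n.
  Points of omega are isolated; neighbourhoods of p are {p} \<union> P with P \<in> p.\<close>
definition pomega_topology :: "nat set set \<Rightarrow> nat option topology" where
  "pomega_topology p = topology (\<lambda>U. None \<in> U \<longrightarrow> (\<exists>P\<in>p. Some ` P \<subseteq> U))"

definition Omega_p :: "nat set set \<Rightarrow> nat option set set" where
  "Omega_p p = {A. A \<subseteq> topspace (pomega_topology p) \<and> None \<notin> A \<and>
                    None \<in> (pomega_topology p) closure_of A}"

definition S1_Omega_p :: "nat set set \<Rightarrow> bool" where
  "S1_Omega_p p \<longleftrightarrow>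
     (\<forall>A :: nat \<Rightarrow> nat option set. (\<forall>n. A n \<in> Omega_p p) \<longrightarrow>
        (\<exists>a. (\<forall>n. a n \<in> A n) \<and> range a \<in> Omega_p p))"

text \<open>The sequential fan S_c: None is the point 0 and Some (alpha, n) is z_n^alpha; the
  index set of size continuum is the type real.\<close>
definition seq_fan_topology :: "(real \<times> nat) option topology" where
  "seq_fan_topology = topology (\<lambda>U. None \<in> U \<longrightarrow>
       (\<exists>f :: real \<Rightarrow> nat. \<forall>\<alpha> n. f \<alpha> \<le> n \<longrightarrow> Some (\<alpha>, n) \<in> U))"

definition countable_tightness_at :: "'a topology \<Rightarrow> 'a \<Rightarrow> bool" where
  "countable_tightness_at X z \<longleftrightarrow>
     (\<forall>A. A \<subseteq> topspace X \<and> z \<in> X closure_of A \<longrightarrow>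
        (\<exists>B\<subseteq>A. countable B \<and> z \<in> X closure_of B))"

end

theory Submission
  imports Defs
begin

text \<open>Selectivity yields selectors: for \<open>B\<^sub>n \<in> p\<close>, the index at which a point first leaves
  \<open>B\<^sub>n \<inter> {n..}\<close> has no fibre in \<open>p\<close>, so it is injective on some member of \<open>p\<close>, and inverting it
  picks \<open>a\<^sub>n \<in> B\<^sub>n\<close> with \<open>{a\<^sub>n} \<in> p\<close>. Since \<open>p\<close> lies in the closure of \<open>A \<subseteq> \<omega>\<close> exactly when
  \<open>A \<in> p\<close>, this is \<open>S\<^sub>1(\<Omega>\<^sub>p, \<Omega>\<^sub>p)\<close>; applied to finite intersections it also shows that \<open>p\<close> is a
  p-point.

  For the product, give each \<open>Y \<in> p\<close> a ray \<open>\<alpha>\<close> of the fan and take the points \<open>(n, z\<^sup>\<alpha>\<^sub>n)\<close> with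
  \<open>n \<notin> Y\<close>. Every basic neighbourhood \<open>P \<times> V(g)\<close> of \<open>\<langle>p, 0\<rangle>\<close> meets them, because \<open>P\<close> contains
  some \<open>Y \<in> p\<close> with \<open>P - Y\<close> infinite. A countable subset uses only countably many \<open>Y\<close>; a
  pseudo-intersection \<open>Q \<in> p\<close> of them, together with a \<open>g\<close> cutting off the finite sets
  \<open>Q - Y\<close>, gives a neighbourhood missing it.\<close>

abbreviation pomega_fan_topology :: "nat set set \<Rightarrow> (nat option \<times> (real \<times> nat) option) topology"
  where "pomega_fan_topology p \<equiv> prod_topology (pomega_topology p) seq_fan_topology"

section \<open>Free ultrafilters on the natural numbers\<close>

lemma infinite_split:
  assumes "infinite S"
  obtains Y where "Y \<subseteq> S" "infinite Y" "infinite (S - Y)"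
proof -
  obtain f :: "nat \<Rightarrow> 'a" where f: "inj f" "range f \<subseteq> S"
    using infinite_countable_subset[OF assms] by blast
  let ?E = "range (\<lambda>n. f (2 * n))" and ?O = "range (\<lambda>n. f (2 * n + 1))"
  have "inj (\<lambda>n. f (2 * n))" "inj (\<lambda>n. f (2 * n + 1))"
    by (auto intro!: injI dest: injD[OF f(1)])
  then have "infinite ?E" "infinite ?O"
    by (simp_all add: range_inj_infinite)
  moreover have "?O \<subseteq> S - ?E"
    using f(2) by (auto simp: inj_eq[OF f(1)]) presburger
  ultimately have "infinite (S - ?E)"
    using infinite_super by blast
  then show thesis
    using f(2) \<open>infinite ?E\<close> by (intro that[of ?E]) auto
qed

context
  fixes p :: "nat set set"
  assumes ultra: "free_ultrafilter_nat p"
begin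

lemma free_ultrafilter_nat_Int: "A \<in> p \<Longrightarrow> B \<in> p \<Longrightarrow> A \<inter> B \<in> p"
  using ultra unfolding free_ultrafilter_nat_def by simp

lemma free_ultrafilter_nat_mono: "A \<in> p \<Longrightarrow> A \<subseteq> B \<Longrightarrow> B \<in> p"
  using ultra unfolding free_ultrafilter_nat_def by auto

lemma free_ultrafilter_nat_infinite: "A \<in> p \<Longrightarrow> infinite A"
  using ultra unfolding free_ultrafilter_nat_def by simp

lemma free_ultrafilter_nat_nonempty: "A \<in> p \<Longrightarrow> A \<noteq> {}"
  using free_ultrafilter_nat_infinite by blast

lemma free_ultrafilter_nat_Compl_iff: "- A \<in> p \<longleftrightarrow> A \<notin> p"
  using ultra unfolding free_ultrafilter_nat_def by (metis Compl_disjoint)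

lemma free_ultrafilter_nat_UNIV: "UNIV \<in> p"
  using free_ultrafilter_nat_Compl_iff[of UNIV] free_ultrafilter_nat_nonempty by auto

lemma free_ultrafilter_nat_Un_iff: "A \<union> B \<in> p \<longleftrightarrow> A \<in> p \<or> B \<in> p"
proof -
  have "- (A \<union> B) = - A \<inter> - B" by blast
  then show ?thesis
    using free_ultrafilter_nat_Compl_iff free_ultrafilter_nat_Int free_ultrafilter_nat_mono
    by (metis Int_lower1 Int_lower2)
qed

lemma free_ultrafilter_nat_finite_Union:
  "finite F \<Longrightarrow> \<Union>F \<in> p \<Longrightarrow> \<exists>A\<in>F. A \<in> p"
  by (induction F rule: finite_induct)
    (auto simp: free_ultrafilter_nat_Un_iff dest: free_ultrafilter_nat_nonempty)

lemma free_ultrafilter_nat_INT: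
  "finite I \<Longrightarrow> (\<And>i. i \<in> I \<Longrightarrow> X i \<in> p) \<Longrightarrow> (\<Inter>i\<in>I. X i) \<in> p"
  by (induction I rule: finite_induct) (auto simp: free_ultrafilter_nat_UNIV free_ultrafilter_nat_Int)

lemma free_ultrafilter_nat_atLeast: "{n..} \<in> p"
proof -
  have "{..<n} \<notin> p" using free_ultrafilter_nat_infinite by blast
  then show ?thesis using free_ultrafilter_nat_Compl_iff by (metis Compl_lessThan)
qed

lemma free_ultrafilter_nat_split:
  assumes "P \<in> p"
  shows "\<exists>Y\<in>p. Y \<subseteq> P \<and> infinite (P - Y)"
proof -
  obtain Y where Y: "Y \<subseteq> P" "infinite Y" "infinite (P - Y)"
    using infinite_split free_ultrafilter_nat_infinite[OF assms] by blast
  show ?thesis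
  proof (cases "Y \<in> p")
    case True
    then show ?thesis using Y by blast
  next
    case False
    then have "P - Y \<in> p"
      using assms free_ultrafilter_nat_Compl_iff free_ultrafilter_nat_Int by (simp add: Diff_eq)
    moreover have "P - (P - Y) = Y" using Y(1) by blast
    ultimately show ?thesis using Y(2) by (intro bexI[of _ "P - Y"]) auto
  qed
qed

end

section \<open>The space $\{p\} \cup \omega$ and the sequential fan\<close>

lemma openin_pomega_topology:
  assumes "free_ultrafilter_nat p"
  shows "openin (pomega_topology p) U \<longleftrightarrow> (None \<in> U \<longrightarrow> (\<exists>P\<in>p. Some ` P \<subseteq> U))"
proof -
  have "istopology (\<lambda>U. None \<in> U \<longrightarrow> (\<exists>P\<in>p. Some ` P \<subseteq> U))"
    unfolding istopology_def
  proof (intro conjI allI impI)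
    fix S T
    assume "None \<in> S \<longrightarrow> (\<exists>P\<in>p. Some ` P \<subseteq> S)" "None \<in> T \<longrightarrow> (\<exists>P\<in>p. Some ` P \<subseteq> T)"
      and "None \<in> S \<inter> T"
    then obtain P Q where "P \<in> p" "Q \<in> p" "Some ` P \<subseteq> S" "Some ` Q \<subseteq> T" by auto
    then show "\<exists>R\<in>p. Some ` R \<subseteq> S \<inter> T"
      using free_ultrafilter_nat_Int[OF assms] by (intro bexI[of _ "P \<inter> Q"]) auto
  next
    fix \<K> :: "nat option set set"
    assume "\<forall>K\<in>\<K>. None \<in> K \<longrightarrow> (\<exists>P\<in>p. Some ` P \<subseteq> K)" and "None \<in> \<Union>\<K>"
    then obtain K P where "K \<in> \<K>" "P \<in> p" "Some ` P \<subseteq> K" by auto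
    then show "\<exists>P\<in>p. Some ` P \<subseteq> \<Union>\<K>" by auto
  qed
  then show ?thesis
    unfolding pomega_topology_def by (simp add: topology_inverse')
qed

lemma topspace_pomega_topology:
  assumes "free_ultrafilter_nat p"
  shows "topspace (pomega_topology p) = UNIV"
proof -
  have "openin (pomega_topology p) UNIV"
    using openin_pomega_topology[OF assms] free_ultrafilter_nat_UNIV[OF assms] by auto
  then show ?thesis
    using openin_subset by auto
qed

lemma None_in_closure_of_pomega_iff:
  assumes ultra: "free_ultrafilter_nat p" and "None \<notin> A"
  shows "None \<in> pomega_topology p closure_of A \<longleftrightarrow> {n. Some n \<in> A} \<in> p"
proof
  assume closure: "None \<in> pomega_topology p closure_of A"
  show "{n. Some n \<in> A} \<in> p"
  proof (rule ccontr)
    assume "{n. Some n \<in> A} \<notin> p"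
    then have "openin (pomega_topology p) (insert None (Some ` (- {n. Some n \<in> A})))"
      using free_ultrafilter_nat_Compl_iff[OF ultra] openin_pomega_topology[OF ultra] by blast
    then obtain y where "y \<in> A" "y \<in> insert None (Some ` (- {n. Some n \<in> A}))"
      using closure unfolding in_closure_of by blast
    then show False using \<open>None \<notin> A\<close> by auto
  qed
next
  assume A: "{n. Some n \<in> A} \<in> p"
  show "None \<in> pomega_topology p closure_of A"
    unfolding in_closure_of topspace_pomega_topology[OF ultra]
  proof (intro conjI allI impI UNIV_I)
    fix T
    assume "None \<in> T \<and> openin (pomega_topology p) T"
    then obtain P where "P \<in> p" "Some ` P \<subseteq> T"
      using openin_pomega_topology[OF ultra] by blast
    moreover have "P \<inter> {n. Some n \<in> A} \<noteq> {}"
      using free_ultrafilter_nat_nonempty[OF ultra] free_ultrafilter_nat_Int[OF ultra \<open>P \<in> p\<close> A] .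
    ultimately show "\<exists>y. y \<in> A \<and> y \<in> T" by blast
  qed
qed

lemma openin_seq_fan_topology:
  "openin seq_fan_topology U \<longleftrightarrow>
     (None \<in> U \<longrightarrow> (\<exists>f :: real \<Rightarrow> nat. \<forall>\<alpha> n. f \<alpha> \<le> n \<longrightarrow> Some (\<alpha>, n) \<in> U))"
proof -
  have "istopology (\<lambda>U. None \<in> U \<longrightarrow> (\<exists>f :: real \<Rightarrow> nat. \<forall>\<alpha> n. f \<alpha> \<le> n \<longrightarrow> Some (\<alpha>, n) \<in> U))"
    unfolding istopology_def
  proof (intro conjI allI impI)
    fix S T :: "(real \<times> nat) option set"
    assume "None \<in> S \<longrightarrow> (\<exists>f :: real \<Rightarrow> nat. \<forall>\<alpha> n. f \<alpha> \<le> n \<longrightarrow> Some (\<alpha>, n) \<in> S)"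
      "None \<in> T \<longrightarrow> (\<exists>f :: real \<Rightarrow> nat. \<forall>\<alpha> n. f \<alpha> \<le> n \<longrightarrow> Some (\<alpha>, n) \<in> T)"
      and "None \<in> S \<inter> T"
    then obtain f g :: "real \<Rightarrow> nat"
      where "\<forall>\<alpha> n. f \<alpha> \<le> n \<longrightarrow> Some (\<alpha>, n) \<in> S" "\<forall>\<alpha> n. g \<alpha> \<le> n \<longrightarrow> Some (\<alpha>, n) \<in> T"
      by auto
    then show "\<exists>h :: real \<Rightarrow> nat. \<forall>\<alpha> n. h \<alpha> \<le> n \<longrightarrow> Some (\<alpha>, n) \<in> S \<inter> T"
      by (intro exI[of _ "\<lambda>\<alpha>. max (f \<alpha>) (g \<alpha>)"]) simp
  next
    fix \<K> :: "(real \<times> nat) option set set"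
    assume "\<forall>K\<in>\<K>. None \<in> K \<longrightarrow> (\<exists>f :: real \<Rightarrow> nat. \<forall>\<alpha> n. f \<alpha> \<le> n \<longrightarrow> Some (\<alpha>, n) \<in> K)"
      and "None \<in> \<Union>\<K>"
    then obtain K and f :: "real \<Rightarrow> nat" where "K \<in> \<K>" "\<forall>\<alpha> n. f \<alpha> \<le> n \<longrightarrow> Some (\<alpha>, n) \<in> K"
      by auto
    then show "\<exists>f :: real \<Rightarrow> nat. \<forall>\<alpha> n. f \<alpha> \<le> n \<longrightarrow> Some (\<alpha>, n) \<in> \<Union>\<K>" by blast
  qed
  then show ?thesis
    unfolding seq_fan_topology_def by (simp add: topology_inverse')
qed

lemma topspace_seq_fan_topology: "topspace seq_fan_topology = UNIV"
proof -
  have "openin seq_fan_topology UNIV"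
    using openin_seq_fan_topology by auto
  then show ?thesis
    using openin_subset by auto
qed

lemma in_closure_of_pomega_fan_iff:
  assumes ultra: "free_ultrafilter_nat p"
  shows "(None, None) \<in> pomega_fan_topology p closure_of S \<longleftrightarrow>
    (\<forall>P\<in>p. \<forall>g :: real \<Rightarrow> nat. \<exists>x z. (x, z) \<in> S \<and>
       x \<in> insert None (Some ` P) \<and> z \<in> insert None {Some (\<alpha>, n) | \<alpha> n. g \<alpha> \<le> n})"
  (is "_ \<in> ?X closure_of S \<longleftrightarrow> (\<forall>P\<in>p. \<forall>g. \<exists>x z. (x, z) \<in> S \<and> x \<in> ?U P \<and> z \<in> ?V g)")
proof -
  have open_nbhd: "openin ?X (?U P \<times> ?V g)" if "P \<in> p" for P g
  proof -
    have "openin (pomega_topology p) (?U P)"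
      unfolding openin_pomega_topology[OF ultra] using that by (intro impI bexI[of _ P]) auto
    moreover have "openin seq_fan_topology (?V g)"
      unfolding openin_seq_fan_topology by (intro impI exI[of _ g]) auto
    ultimately show ?thesis
      unfolding openin_prod_Times_iff by (intro disjI2 conjI)
  qed
  have basis: "\<exists>P\<in>p. \<exists>g. ?U P \<times> ?V g \<subseteq> T"
    if T: "openin ?X T" "(None, None) \<in> T" for T
  proof -
    obtain U V where UV: "openin (pomega_topology p) U" "openin seq_fan_topology V"
      "None \<in> U" "None \<in> V" "U \<times> V \<subseteq> T"
      using T(1)[unfolded openin_prod_topology_alt, rule_format, OF T(2)] by blast
    obtain P where "P \<in> p" "Some ` P \<subseteq> U"
      using UV(1,3) openin_pomega_topology[OF ultra] by blast
    moreover obtain g :: "real \<Rightarrow> nat" where "\<forall>\<alpha> n. g \<alpha> \<le> n \<longrightarrow> Some (\<alpha>, n) \<in> V"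
      using UV(2,4) openin_seq_fan_topology by blast
    ultimately have "?U P \<subseteq> U" "?V g \<subseteq> V" "P \<in> p"
      using UV(3,4) by auto
    then show ?thesis
      using UV(5) by (meson Sigma_mono order_trans)
  qed
  show ?thesis
  proof (intro iffI ballI allI)
    fix P g
    assume closure: "(None, None) \<in> ?X closure_of S" and "P \<in> p"
    from closure have "\<forall>T. (None, None) \<in> T \<and> openin ?X T \<longrightarrow> (\<exists>y. y \<in> S \<and> y \<in> T)"
      unfolding in_closure_of by (rule conjunct2)
    moreover have "(None, None) \<in> ?U P \<times> ?V g" by simp
    ultimately obtain y where "y \<in> S" "y \<in> ?U P \<times> ?V g"
      using open_nbhd[OF \<open>P \<in> p\<close>] by (meson conjI)
    then show "\<exists>x z. (x, z) \<in> S \<and> x \<in> ?U P \<and> z \<in> ?V g"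
      by (cases y) auto
  next
    assume nbhds: "\<forall>P\<in>p. \<forall>g. \<exists>x z. (x, z) \<in> S \<and> x \<in> ?U P \<and> z \<in> ?V g"
    show "(None, None) \<in> ?X closure_of S"
      unfolding in_closure_of
    proof (intro conjI allI impI)
      show "(None, None) \<in> topspace ?X"
        by (simp add: topspace_pomega_topology[OF ultra] topspace_seq_fan_topology)
      fix T
      assume "(None, None) \<in> T \<and> openin ?X T"
      then obtain P g where "P \<in> p" "?U P \<times> ?V g \<subseteq> T"
        using basis by blast
      moreover obtain x z where "(x, z) \<in> S" "x \<in> ?U P" "z \<in> ?V g"
        using bspec[OF nbhds \<open>P \<in> p\<close>, THEN spec[of _ g]] by (elim exE conjE)
      ultimately show "\<exists>y. y \<in> S \<and> y \<in> T" by (meson SigmaI subsetD)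
    qed
  qed
qed

section \<open>Selective ultrafilters\<close>

lemma selective_imp_free_ultrafilter_nat: "selective p \<Longrightarrow> free_ultrafilter_nat p"
  by (simp add: selective_def)

lemma selective_inj_on:
  fixes g :: "nat \<Rightarrow> nat"
  assumes sel: "selective p" and fibres: "\<And>y. g -` {y} \<notin> p"
  obtains P where "P \<in> p" "inj_on g P"
proof -
  note ultra = selective_imp_free_ultrafilter_nat[OF sel]
  have "infinite (range g)"
  proof
    assume "finite (range g)"
    then have "finite ((\<lambda>y. g -` {y}) ` range g)" by simp
    moreover have "\<Union>((\<lambda>y. g -` {y}) ` range g) = UNIV" by auto
    ultimately have "\<exists>B\<in>(\<lambda>y. g -` {y}) ` range g. B \<in> p"
      using free_ultrafilter_nat_UNIV[OF ultra] by (intro free_ultrafilter_nat_finite_Union[OF ultra]) simp_all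
    then show False using fibres by blast
  qed
  define r where "r = enumerate (range g)"
  have r: "bij_betw r UNIV (range g)"
    unfolding r_def using bij_enumerate[OF \<open>infinite (range g)\<close>] .
  have level_of: "\<exists>n. g x = r n" for x
  proof -
    have "g x \<in> r ` UNIV" using bij_betw_imp_surj_on[OF r] by simp
    then show ?thesis by (simp add: image_iff)
  qed
  define A where "A n = g -` {r n}" for n
  have nonempty: "\<forall>n. A n \<noteq> {}"
  proof
    fix n
    have "r n \<in> range g" using bij_betw_apply[OF r] by simp
    then show "A n \<noteq> {}" unfolding A_def by auto
  qed
  have disjoint: "\<forall>m n. m \<noteq> n \<longrightarrow> A m \<inter> A n = {}"
    unfolding A_def using inj_eq[OF bij_betw_imp_inj_on[OF r]] by auto
  have cover: "(\<Union>n. A n) = UNIV"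
    using level_of unfolding A_def by auto
  have small: "\<forall>n. A n \<notin> p"
    unfolding A_def using fibres by simp
  have "(\<forall>n. A n \<noteq> {}) \<and> (\<forall>m n. m \<noteq> n \<longrightarrow> A m \<inter> A n = {}) \<and> (\<Union>n. A n) = UNIV
      \<and> (\<forall>n. A n \<notin> p) \<longrightarrow> (\<exists>P\<in>p. \<forall>n. card (P \<inter> A n) = 1 \<and> finite (P \<inter> A n))"
    using sel unfolding selective_def by (elim conjE) (erule spec)
  then obtain P where P: "P \<in> p" "\<And>n. card (P \<inter> A n) = 1"
    using nonempty disjoint cover small by blast
  have "inj_on g P"
  proof (rule inj_onI)
    fix x y assume "x \<in> P" "y \<in> P" "g x = g y"
    moreover obtain n where "g x = r n" using level_of by blast
    ultimately have "x \<in> P \<inter> A n" "y \<in> P \<inter> A n"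
      unfolding A_def by auto
    moreover obtain z where "P \<inter> A n = {z}"
      using P(2) card_1_singletonE by blast
    ultimately show "x = y" by simp
  qed
  then show thesis using P(1) that by blast
qed

lemma selective_injective_levels:
  assumes sel: "selective p" and C: "\<And>n. C n \<in> p" and "(\<Inter>n. C n) \<notin> p"
  shows "\<exists>Q\<in>p. \<exists>k :: nat \<Rightarrow> nat. inj_on k Q \<and> (\<forall>x\<in>Q. x \<in> C (k x))"
proof -
  note ultra = selective_imp_free_ultrafilter_nat[OF sel]
  define k where "k x = (LEAST n. x \<notin> C (Suc n))" for x
  have level: "x \<in> C (k x) \<and> x \<notin> C (Suc (k x))"
    if x0: "x \<in> C 0" and "x \<notin> (\<Inter>n. C n)" for x
  proof
    obtain m where "x \<notin> C m" using \<open>x \<notin> (\<Inter>n. C n)\<close> by blast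
    with x0 obtain n where "x \<notin> C (Suc n)" by (cases m) auto
    then show "x \<notin> C (Suc (k x))"
      unfolding k_def by (rule LeastI)
    show "x \<in> C (k x)"
    proof (cases "k x")
      case (Suc j)
      then have "j < k x" by simp
      then have "\<not> x \<notin> C (Suc j)"
        unfolding k_def by (rule not_less_Least)
      then show ?thesis using Suc by simp
    qed (use x0 in simp)
  qed
  have "k -` {n} \<notin> p" for n
  proof -
    have "k -` {n} \<subseteq> - C 0 \<union> (\<Inter>n. C n) \<union> - C (Suc n)"
    proof
      fix x assume "x \<in> k -` {n}"
      then show "x \<in> - C 0 \<union> (\<Inter>n. C n) \<union> - C (Suc n)"
        using level[of x] by auto
    qed
    moreover have "- C 0 \<union> (\<Inter>n. C n) \<union> - C (Suc n) \<notin> p"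
      using C \<open>(\<Inter>n. C n) \<notin> p\<close>
      by (simp add: free_ultrafilter_nat_Un_iff[OF ultra] free_ultrafilter_nat_Compl_iff[OF ultra])
    ultimately show ?thesis
      using free_ultrafilter_nat_mono[OF ultra] by blast
  qed
  then obtain P where "P \<in> p" "inj_on k P"
    using selective_inj_on[OF sel] by blast
  define Q where "Q = P \<inter> C 0 \<inter> - (\<Inter>n. C n)"
  have "- (\<Inter>n. C n) \<in> p"
    using \<open>(\<Inter>n. C n) \<notin> p\<close> free_ultrafilter_nat_Compl_iff[OF ultra] by blast
  then have "Q \<in> p"
    unfolding Q_def by (intro free_ultrafilter_nat_Int[OF ultra] \<open>P \<in> p\<close> C)
  moreover have "inj_on k Q"
    unfolding Q_def using \<open>inj_on k P\<close> by (rule inj_on_subset) blast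
  moreover have "\<forall>x\<in>Q. x \<in> C (k x)"
    using level unfolding Q_def by blast
  ultimately show ?thesis by blast
qed

lemma selective_selector:
  fixes B :: "nat \<Rightarrow> nat set"
  assumes sel: "selective p" and B: "\<And>n. B n \<in> p"
  shows "\<exists>a. (\<forall>n. a n \<in> B n) \<and> range a \<in> p"
proof -
  note ultra = selective_imp_free_ultrafilter_nat[OF sel]
  define C where "C n = B n \<inter> {n..}" for n
  have C: "C n \<in> p" for n
    unfolding C_def by (intro free_ultrafilter_nat_Int[OF ultra] B free_ultrafilter_nat_atLeast[OF ultra])
  have "(\<Inter>n. C n) = {}"
  proof (rule equals0I)
    fix x assume "x \<in> (\<Inter>n. C n)"
    then have "x \<in> C (Suc x)" by blast
    then show False unfolding C_def by simp
  qed
  then have "(\<Inter>n. C n) \<notin> p"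
    using free_ultrafilter_nat_nonempty[OF ultra] by auto
  then have "\<exists>Q\<in>p. \<exists>k :: nat \<Rightarrow> nat. inj_on k Q \<and> (\<forall>x\<in>Q. x \<in> C (k x))"
    by (rule selective_injective_levels[OF sel C])
  then obtain Q and k :: "nat \<Rightarrow> nat" where Q: "Q \<in> p" "inj_on k Q" "\<forall>x\<in>Q. x \<in> C (k x)"
    by blast
  define a where "a n = (if n \<in> k ` Q then inv_into Q k n else (SOME x. x \<in> C n))" for n
  have a: "a n \<in> C n" for n
  proof (cases "n \<in> k ` Q")
    case True
    then obtain x where "x \<in> Q" "n = k x" by blast
    then have "a n = x"
      unfolding a_def using inv_into_f_f[OF Q(2)] by simp
    moreover have "x \<in> C (k x)" using Q(3) \<open>x \<in> Q\<close> by blast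
    ultimately show ?thesis using \<open>n = k x\<close> by simp
  next
    case False
    have "C n \<noteq> {}" using free_ultrafilter_nat_nonempty[OF ultra C] .
    then show ?thesis
      unfolding a_def using False by (simp add: some_in_eq)
  qed
  have "Q \<subseteq> range a"
  proof
    fix x assume "x \<in> Q"
    then have "a (k x) = x"
      unfolding a_def using inv_into_f_f[OF Q(2)] by simp
    then show "x \<in> range a" by (metis rangeI)
  qed
  moreover have "\<forall>n. a n \<in> B n"
    using a unfolding C_def by blast
  ultimately show ?thesis
    using free_ultrafilter_nat_mono[OF ultra Q(1)] by blast
qed

lemma selective_p_point:
  assumes sel: "selective p" and "countable F" "F \<subseteq> p"
  shows "\<exists>Q\<in>p. \<forall>X\<in>F. finite (Q - X)"
proof (cases "F = {}")
  case True
  then show ?thesis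
    using free_ultrafilter_nat_UNIV[OF selective_imp_free_ultrafilter_nat[OF sel]] by blast
next
  case False
  define C where "C n = (\<Inter>j\<le>n. from_nat_into F j)" for n
  have "C n \<in> p" for n
    unfolding C_def using \<open>F \<subseteq> p\<close> from_nat_into[OF False]
    by (intro free_ultrafilter_nat_INT[OF selective_imp_free_ultrafilter_nat[OF sel]]) auto
  then obtain a where a: "\<forall>n. a n \<in> C n" "range a \<in> p"
    using selective_selector[OF sel] by blast
  have "finite (range a - X)" if X: "X \<in> F" for X
  proof -
    obtain m where m: "X = from_nat_into F m"
      using from_nat_into_surj[OF \<open>countable F\<close> X] by metis
    have "range a - X \<subseteq> a ` {..<m}"
    proof
      fix x assume "x \<in> range a - X"
      then obtain n where "x = a n" "a n \<notin> X" by blast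
      have "\<not> m \<le> n"
      proof
        assume "m \<le> n"
        then have "a n \<in> from_nat_into F m"
          using a(1) unfolding C_def by blast
        then show False using \<open>a n \<notin> X\<close> m by simp
      qed
      then show "x \<in> a ` {..<m}"
        unfolding \<open>x = a n\<close> by (intro imageI) simp
    qed
    then show ?thesis by (rule finite_subset) simp
  qed
  then show ?thesis
    using a(2) by blast
qed

section \<open>The selection principle and the tightness of the product\<close>

lemma S1_Omega_p_if_selective:
  assumes sel: "selective p"
  shows "S1_Omega_p p"
  unfolding S1_Omega_p_def
proof (intro allI impI)
  note ultra = selective_imp_free_ultrafilter_nat[OF sel]
  fix A :: "nat \<Rightarrow> nat option set"
  assume A: "\<forall>n. A n \<in> Omega_p p"
  have selected: "{m. Some m \<in> A n} \<in> p" for n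
  proof -
    from A have "None \<notin> A n" "None \<in> pomega_topology p closure_of A n"
      unfolding Omega_p_def by auto
    then show ?thesis
      by (simp add: None_in_closure_of_pomega_iff[OF ultra])
  qed
  from selective_selector[OF sel, of "\<lambda>n. {m. Some m \<in> A n}", OF selected]
  obtain a where a: "\<forall>n. a n \<in> {m. Some m \<in> A n}" "range a \<in> p"
    by blast
  have "{m. Some m \<in> range (\<lambda>n. Some (a n))} = range a" by auto
  moreover have "None \<notin> range (\<lambda>n. Some (a n))" by auto
  ultimately have "None \<in> pomega_topology p closure_of range (\<lambda>n. Some (a n))"
    using a(2) None_in_closure_of_pomega_iff[OF ultra] by simp
  with \<open>None \<notin> range (\<lambda>n. Some (a n))\<close> have "range (\<lambda>n. Some (a n)) \<in> Omega_p p"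
    unfolding Omega_p_def by (simp add: topspace_pomega_topology[OF ultra])
  moreover have "\<forall>n. Some (a n) \<in> A n" using a(1) by simp
  ultimately show "\<exists>b. (\<forall>n. b n \<in> A n) \<and> range b \<in> Omega_p p"
    by (intro exI[of _ "\<lambda>n. Some (a n)"]) simp
qed

definition fan_diagonal :: "nat set set \<Rightarrow> (real \<Rightarrow> nat set) \<Rightarrow> (nat option \<times> (real \<times> nat) option) set"
  where "fan_diagonal p h = {(Some n, Some (\<alpha>, n)) | \<alpha> n. h \<alpha> \<in> p \<and> n \<notin> h \<alpha>}"

lemma fan_diagonal_closure:
  assumes ultra: "free_ultrafilter_nat p" and "surj h"
  shows "(None, None) \<in> pomega_fan_topology p closure_of fan_diagonal p h"
  unfolding in_closure_of_pomega_fan_iff[OF ultra]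
proof (intro ballI allI)
  fix P g assume "P \<in> p"
  then obtain Y where Y: "Y \<in> p" "Y \<subseteq> P" "infinite (P - Y)"
    using free_ultrafilter_nat_split[OF ultra] by blast
  obtain \<alpha> where "h \<alpha> = Y" using \<open>surj h\<close> by (metis surjD)
  obtain n where "n \<in> P - Y" "g \<alpha> \<le> n"
    using Y(3) unfolding infinite_nat_iff_unbounded_le by blast
  then have "(Some n, Some (\<alpha>, n)) \<in> fan_diagonal p h"
    unfolding fan_diagonal_def using Y(1) \<open>h \<alpha> = Y\<close> by blast
  with \<open>n \<in> P - Y\<close> \<open>g \<alpha> \<le> n\<close> show "\<exists>x z. (x, z) \<in> fan_diagonal p h \<and>
      x \<in> insert None (Some ` P) \<and> z \<in> insert None {Some (\<alpha>, n) | \<alpha> n. g \<alpha> \<le> n}"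
    by (intro exI[of _ "Some n"] exI[of _ "Some (\<alpha>, n)"]) auto
qed

lemma countable_subset_fan_diagonal_not_closure:
  assumes sel: "selective p" and "countable B" "B \<subseteq> fan_diagonal p h"
  shows "(None, None) \<notin> pomega_fan_topology p closure_of B"
proof
  note ultra = selective_imp_free_ultrafilter_nat[OF sel]
  assume closure: "(None, None) \<in> pomega_fan_topology p closure_of B"
  define F where "F = (\<lambda>(x, z). h (fst (the z))) ` B"
  have "F \<subseteq> p"
  proof
    fix X assume "X \<in> F"
    then obtain x z where "(x, z) \<in> B" "X = h (fst (the z))"
      unfolding F_def by auto
    moreover from this have "(x, z) \<in> fan_diagonal p h"
      using \<open>B \<subseteq> fan_diagonal p h\<close> by blast
    ultimately show "X \<in> p"
      unfolding fan_diagonal_def by auto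
  qed
  have "\<exists>Q\<in>p. \<forall>X\<in>F. finite (Q - X)"
    by (rule selective_p_point[OF sel _ \<open>F \<subseteq> p\<close>]) (simp add: F_def \<open>countable B\<close>)
  then obtain Q where "Q \<in> p" "\<forall>X\<in>F. finite (Q - X)" by blast
  define g where "g \<alpha> = Suc (Max (Q - h \<alpha>))" for \<alpha>
  have "\<exists>x z. (x, z) \<in> B \<and> x \<in> insert None (Some ` Q) \<and> z \<in> insert None {Some (\<alpha>, n) | \<alpha> n. g \<alpha> \<le> n}"
    using bspec[OF closure[unfolded in_closure_of_pomega_fan_iff[OF ultra]] \<open>Q \<in> p\<close>, THEN spec[of _ g]] .
  then obtain x z where xz: "(x, z) \<in> B" "x \<in> insert None (Some ` Q)"
    "z \<in> insert None {Some (\<alpha>, n) | \<alpha> n. g \<alpha> \<le> n}"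
    by blast
  then have "(x, z) \<in> fan_diagonal p h" using \<open>B \<subseteq> fan_diagonal p h\<close> by blast
  then obtain \<alpha> n where "x = Some n" "z = Some (\<alpha>, n)" "n \<notin> h \<alpha>"
    unfolding fan_diagonal_def by auto
  with xz have "n \<in> Q - h \<alpha>" "g \<alpha> \<le> n" by auto
  moreover have "h \<alpha> \<in> F"
    unfolding F_def using xz(1) \<open>z = Some (\<alpha>, n)\<close> by (intro image_eqI[of _ _ "(x, z)"]) simp_all
  then have "finite (Q - h \<alpha>)" using \<open>\<forall>X\<in>F. finite (Q - X)\<close> by blast
  ultimately have "n \<le> Max (Q - h \<alpha>)" "Suc (Max (Q - h \<alpha>)) \<le> n"
    unfolding g_def by simp_all
  then show False by simp
qed

lemma not_countable_tightness_pomega_fan: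
  assumes sel: "selective p"
  shows "\<not> countable_tightness_at (pomega_fan_topology p) (None, None)"
proof
  note ultra = selective_imp_free_ultrafilter_nat[OF sel]
  from eqpoll_sym[OF nat_sets_eqpoll_reals] obtain h :: "real \<Rightarrow> nat set" where "bij_betw h UNIV UNIV"
    unfolding eqpoll_def by blast
  then have "surj h" by (rule bij_betw_imp_surj)
  have "fan_diagonal p h \<subseteq> topspace (pomega_fan_topology p)"
    by (simp add: topspace_pomega_topology[OF ultra] topspace_seq_fan_topology)
  moreover assume "countable_tightness_at (pomega_fan_topology p) (None, None)"
  ultimately obtain B where "B \<subseteq> fan_diagonal p h" "countable B"
    "(None, None) \<in> pomega_fan_topology p closure_of B"
    using fan_diagonal_closure[OF ultra \<open>surj h\<close>] unfolding countable_tightness_at_def by blast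
  then show False
    using countable_subset_fan_diagonal_not_closure[OF sel] by blast
qed

theorem proposition4p2:
  fixes p :: "nat set set"
  assumes "free_ultrafilter_nat p" and "selective p"
  shows "S1_Omega_p p \<and>
         \<not> countable_tightness_at (prod_topology (pomega_topology p) seq_fan_topology) (None, None)"
  using S1_Omega_p_if_selective[OF assms(2)] not_countable_tightness_pomega_fan[OF assms(2)] by blast

end
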